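(* Let $A$ be the filtered boundary matrix of a Morse decomposition with respect to an admissible enumeration $\sigma_1,\dots,\sigma_n$ (see context), and let $A_{out}$ be the matrix obtained after the column-reduction phase of ConMat. Then $A_{out}$ satisfies: (R1) the map $J_h(A_{out})\ni j\mapsto\mathrm{low}_{A_{out}}(j)\in J_t(A_{out})$ is a well-defined bijection; (R2) $J_h(A_{out})\cap J_t(A_{out})=\emptyset$; (R3) if $A_{out}[i,j]=1$ for some $i\le\mathrm{low}_{A_{out}}(j)$, then there is no $s\in J_h(A_{out})$ with $s<j$ and $\mathrm{low}_{A_{out}}(s)=i$.
   Context: $K$ is a finite simplicial complex ($\tau\le\sigma$: $\tau$ is a face of $\sigma$; $\mathrm{cl}(\sigma)=\{\tau:\tau\le\sigma\}$). A multivector field $\mathcal V$ on $K$ is a partition of $K$ into convex sets $V$ (if $\sigma,\tau\in V$ and $\sigma\le\mu\le\tau$ then $\mu\in V$); $[\sigma]_{\mathcal V}$ is the part containing $\sigma$, $F_{\mathcal V}(\sigma)=[\sigma]_{\mathcal V}\cup\mathrm{cl}(\sigma)$, and a path is a sequence $\sigma_1,\dots,\sigma_r$ with $\sigma_k\in F_{\mathcal V}(\sigma_{k-1})$. A Morse decomposition indexed by a finite poset $(P,\le_P)$ is a partition $K=\bigsqcup_{p\in P}M_p$ such that every path from $M_p$ to $M_q$ has $q\le_P p$; $[\sigma]_P$ is the $p$ with $\sigma\in M_p$. An admissible enumeration is $\sigma_1,\dots,\sigma_n$ of all simplices of $K$ such that (a) for some linear extension $\le_{lin}$ of $\le_P$,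 $i\le j\Rightarrow[\sigma_i]_P\le_{lin}[\sigma_j]_P$; (b) if $\sigma_i$ is a proper face of $\sigma_j$ then $i<j$. The filtered boundary matrix $A$ is the $n\times n$ $\mathbb Z_2$-matrix with $A[i,j]=1$ iff $\sigma_i$ is a codimension-one face of $\sigma_j$; row/column $i$ represents $\sigma_i$. For a nonzero column $j$ of such a matrix $B$, $\mathrm{low}_B(j)$ is the largest $i$ with $B[i,j]=1$. Column (and row) $j$ is homogeneous if nonzero and $\sigma_j$, $\sigma_{\mathrm{low}_B(j)}$ are in the same Morse set; then index $\mathrm{low}_B(j)$ is targetable. $J_h(B)$, $J_t(B)$: sets of homogeneous, targetable indices. ConMat reduction phase on $A$ (in place): for $j=1,\dots,n$: for $i=\mathrm{low}_A(j)$ down to $1$: if $A[i,j]=1$ and some column $s<j$ of the current matrix is homogeneous with $\mathrm{low}_A(s)=i$, add column $s$ to column $j$ (mod 2). $A_{out}$ is the matrix after the outer loop. *)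

theory Defs
  imports Main "HOL-Library.Disjoint_Sets"
begin

definition simplicial_complex :: "'v set set \<Rightarrow> bool" where
  "simplicial_complex K \<longleftrightarrow> finite K \<and>
     (\<forall>\<sigma>\<in>K. finite \<sigma> \<and> \<sigma> \<noteq> {}) \<and>
     (\<forall>\<sigma>\<in>K. \<forall>\<tau>. \<tau> \<subseteq> \<sigma> \<and> \<tau> \<noteq> {} \<longrightarrow> \<tau> \<in> K)"

definition closure_cl :: "'v set set \<Rightarrow> 'v set \<Rightarrow> 'v set set" where
  "closure_cl K \<sigma> = {\<tau>\<in>K. \<tau> \<subseteq> \<sigma>}"

definition multivector_field :: "'v set set \<Rightarrow> 'v set set set \<Rightarrow> bool" where
  "multivector_field K V \<longleftrightarrow> partition_on K V \<and>
     (\<forall>B\<in>V. \<forall>\<sigma> \<tau> \<mu>. \<sigma> \<in> B \<and> \<tau> \<in> B \<and> \<mu> \<in> K \<and> \<sigma> \<subseteq> \<mu> \<and> \<mu> \<subseteq> \<tau> \<longrightarrow> \<mu> \<in> B)"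

definition mvf_class :: "'v set set set \<Rightarrow> 'v set \<Rightarrow> 'v set set" where
  "mvf_class V \<sigma> = (THE B. B \<in> V \<and> \<sigma> \<in> B)"

definition F_mvf :: "'v set set \<Rightarrow> 'v set set set \<Rightarrow> 'v set \<Rightarrow> 'v set set" where
  "F_mvf K V \<sigma> = mvf_class V \<sigma> \<union> closure_cl K \<sigma>"

definition is_path :: "'v set set \<Rightarrow> 'v set set set \<Rightarrow> 'v set list \<Rightarrow> bool" where
  "is_path K V xs \<longleftrightarrow> xs \<noteq> [] \<and>
     (\<forall>k. Suc k < length xs \<longrightarrow> xs ! Suc k \<in> F_mvf K V (xs ! k))"

text \<open>A Morse decomposition indexed by a finite poset P (order inherited from the
  type class order), given by the map idx sending sigma to [sigma]_P, i.e.
  M_p = {sigma in K. idx sigma = p}.\<close>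
definition morse_decomposition ::
  "'v set set \<Rightarrow> 'v set set set \<Rightarrow> 'p::order set \<Rightarrow> ('v set \<Rightarrow> 'p) \<Rightarrow> bool" where
  "morse_decomposition K V P idx \<longleftrightarrow> finite P \<and> idx ` K \<subseteq> P \<and>
     (\<forall>xs. is_path K V xs \<and> hd xs \<in> K \<longrightarrow> idx (last xs) \<le> idx (hd xs))"

definition admissible_enumeration ::
  "'v set set \<Rightarrow> 'p::order set \<Rightarrow> ('v set \<Rightarrow> 'p) \<Rightarrow> (nat \<Rightarrow> 'v set) \<Rightarrow> bool" where
  "admissible_enumeration K P idx \<sigma> \<longleftrightarrow>
     bij_betw \<sigma> {1..card K} K \<and>
     (\<exists>r. linear_order_on P r \<and> {(p, q). p \<in> P \<and> q \<in> P \<and> p \<le> q} \<subseteq> r \<and>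
          (\<forall>i\<in>{1..card K}. \<forall>j\<in>{1..card K}. i \<le> j \<longrightarrow> (idx (\<sigma> i), idx (\<sigma> j)) \<in> r)) \<and>
     (\<forall>i\<in>{1..card K}. \<forall>j\<in>{1..card K}. \<sigma> i \<subset> \<sigma> j \<longrightarrow> i < j)"

type_synonym mat = "nat \<Rightarrow> nat \<Rightarrow> bool"  \<comment> \<open>entries over Z_2; indices 1..n\<close>

definition boundary_matrix :: "nat \<Rightarrow> (nat \<Rightarrow> 'v set) \<Rightarrow> mat" where
  "boundary_matrix n \<sigma> = (\<lambda>i j. i \<in> {1..n} \<and> j \<in> {1..n} \<and>
      \<sigma> i \<subseteq> \<sigma> j \<and> card (\<sigma> i) + 1 = card (\<sigma> j))"

definition nonzero_col :: "nat \<Rightarrow> mat \<Rightarrow> nat \<Rightarrow> bool" where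
  "nonzero_col n B j \<longleftrightarrow> (\<exists>i\<in>{1..n}. B i j)"

definition low :: "nat \<Rightarrow> mat \<Rightarrow> nat \<Rightarrow> nat" where
  "low n B j = Max {i\<in>{1..n}. B i j}"

text \<open>c i is the Morse index [sigma_i]_P of the i-th simplex.\<close>
definition homog :: "nat \<Rightarrow> (nat \<Rightarrow> 'p) \<Rightarrow> mat \<Rightarrow> nat \<Rightarrow> bool" where
  "homog n c B j \<longleftrightarrow> j \<in> {1..n} \<and> nonzero_col n B j \<and> c j = c (low n B j)"

definition Jh :: "nat \<Rightarrow> (nat \<Rightarrow> 'p) \<Rightarrow> mat \<Rightarrow> nat set" where
  "Jh n c B = {j. homog n c B j}"

definition Jt :: "nat \<Rightarrow> (nat \<Rightarrow> 'p) \<Rightarrow> mat \<Rightarrow> nat set" where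
  "Jt n c B = low n B ` Jh n c B"

definition add_col :: "mat \<Rightarrow> nat \<Rightarrow> nat \<Rightarrow> mat" where
  "add_col B s j = (\<lambda>i k. if k = j then (B i j \<noteq> B i s) else B i k)"

text \<open>Inner loop for column j, processing rows i, i-1, ..., 1. Relational, so that
  any choice of the column s is allowed.\<close>
inductive conmat_inner :: "nat \<Rightarrow> (nat \<Rightarrow> 'p) \<Rightarrow> nat \<Rightarrow> nat \<Rightarrow> mat \<Rightarrow> mat \<Rightarrow> bool"
  for n c j where
  base: "conmat_inner n c j 0 B B"
| add: "\<lbrakk> B (Suc i) j; s < j; homog n c B s; low n B s = Suc i;
          conmat_inner n c j i (add_col B s j) B' \<rbrakk> \<Longrightarrow> conmat_inner n c j (Suc i) B B'"
| skip: "\<lbrakk> \<not> (B (Suc i) j \<and> (\<exists>s<j. homog n c B s \<and> low n B s = Suc i));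
          conmat_inner n c j i B B' \<rbrakk> \<Longrightarrow> conmat_inner n c j (Suc i) B B'"

inductive conmat_outer :: "nat \<Rightarrow> (nat \<Rightarrow> 'p) \<Rightarrow> nat \<Rightarrow> mat \<Rightarrow> mat \<Rightarrow> bool"
  for n c where
  finish: "n < j \<Longrightarrow> conmat_outer n c j B B"
| step: "\<lbrakk> j \<le> n;
           conmat_inner n c j (if nonzero_col n B j then low n B j else 0) B B1;
           conmat_outer n c (Suc j) B1 B2 \<rbrakk> \<Longrightarrow> conmat_outer n c j B B2"

definition conmat_reduction :: "nat \<Rightarrow> (nat \<Rightarrow> 'p) \<Rightarrow> mat \<Rightarrow> mat \<Rightarrow> bool" where
  "conmat_reduction n c A Aout \<longleftrightarrow> conmat_outer n c 1 A Aout"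

end

theory Submission
  imports Defs "HOL-Library.Z2" "HOL-Library.Function_Algebras"
begin

(* Every column operation of the reduction adds an earlier column to a later one, so
   A_out = A U with U upper unitriangular over Z_2, and every prefix of columns of A_out
   spans the same space as the corresponding prefix of A. The inner loop clears every entry
   of column j lying on the pivot of an earlier homogeneous column, which is (R3); two
   homogeneous columns with the same pivot would violate (R3) for the later one, so (R1).
   For (R2), let column s be homogeneous with pivot j and column j homogeneous. Since
   A^2 = 0, A times column s of A_out vanishes, so column j of A, and hence of A_out, is a
   sum of earlier columns of A_out. The Morse sets are intervals of the enumeration, so on
   the rows of the Morse set of j only homogeneous columns of that Morse set contribute to
   this sum; their pivots are distinct by (R1), so the pivot of the sum is one of them, and
   it must be the pivot of column j, contradicting (R3). *)

declare add_bit_eq_xor [simp del] mult_bit_eq_and [simp del] sum_of_bool_eq [simp del]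

lemma bit_add_self [simp]: "(x::bit) + x = 0"
  by (cases x) simp_all

lemma bitvec_add_self [simp]: "(v :: 'a \<Rightarrow> bit) + v = 0"
  by (simp add: fun_eq_iff)

lemma bitvec_add_add_cancel [simp]: "v + w + w = (v :: 'a \<Rightarrow> bit)"
  by (simp add: add.assoc)

lemma bitvec_add_eq_0_iff: "v + w = 0 \<longleftrightarrow> v = (w :: 'a \<Rightarrow> bit)"
  by (metis bitvec_add_add_cancel add_0)

lemma of_bool_neq_bit: "(of_bool (a \<noteq> b) :: bit) = of_bool a + of_bool b"
  by (cases a; cases b) simp_all

lemma sum_fun_apply: "(\<Sum>t\<in>T. f t) x = (\<Sum>t\<in>T. f t x)"
  by (induction T rule: infinite_finite_induct) simp_all

lemma sum_symmetric_diff: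
  fixes f :: "'a \<Rightarrow> 'b::ab_group_add"
  assumes "finite T" "finite U" and exponent_two: "\<And>x::'b. x + x = 0"
  shows "sum f ((T - U) \<union> (U - T)) = sum f T + sum f U"
proof -
  have "sum f T + sum f U = sum f (T - U) + sum f (U - T) + (sum f (T \<inter> U) + sum f (T \<inter> U))"
    using sum.Int_Diff[OF assms(1), of f U] sum.Int_Diff[OF assms(2), of f T]
    by (simp add: Int_commute algebra_simps)
  also have "sum f (T - U) + sum f (U - T) = sum f ((T - U) \<union> (U - T))"
    by (rule sum.union_disjoint[symmetric]) (use assms in auto)
  finally show ?thesis by (simp add: exponent_two)
qed

definition column :: "mat \<Rightarrow> nat \<Rightarrow> nat \<Rightarrow> bit" where
  "column B k = (\<lambda>i. of_bool (B i k))"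

definition col_span :: "mat \<Rightarrow> nat set \<Rightarrow> (nat \<Rightarrow> bit) set" where
  "col_span B S = {sum (column B) T | T. finite T \<and> T \<subseteq> S}"

lemma sum_column_in_col_span: "finite T \<Longrightarrow> T \<subseteq> S \<Longrightarrow> sum (column B) T \<in> col_span B S"
  by (auto simp: col_span_def)

lemma zero_in_col_span: "0 \<in> col_span B S"
  using sum_column_in_col_span[of "{}" S B] by (simp only: sum.empty finite.emptyI empty_subsetI)

lemma column_in_col_span: "t \<in> S \<Longrightarrow> column B t \<in> col_span B S"
  using sum_column_in_col_span[of "{t}"] by simp

lemma col_span_add:
  assumes "v \<in> col_span B S" "w \<in> col_span B S"
  shows "v + w \<in> col_span B S"
proof -
  obtain T U where "finite T" "T \<subseteq> S" "v = sum (column B) T"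
    and "finite U" "U \<subseteq> S" "w = sum (column B) U"
    using assms by (auto simp: col_span_def)
  then show ?thesis
    using sum_symmetric_diff[of T U "column B"] sum_column_in_col_span[of "(T - U) \<union> (U - T)" S B]
    by auto
qed

lemma col_span_mono: "S \<subseteq> S' \<Longrightarrow> col_span B S \<subseteq> col_span B S'"
  by (auto simp: col_span_def)

lemma col_span_subset:
  assumes "\<And>t. t \<in> S \<Longrightarrow> column A t \<in> col_span B S"
  shows "col_span A S \<subseteq> col_span B S"
proof
  fix v assume "v \<in> col_span A S"
  then obtain T where T: "finite T" "T \<subseteq> S" "v = sum (column A) T"
    by (auto simp: col_span_def)
  have "sum (column A) T \<in> col_span B S"
    using T(1,2)
  proof (induction T rule: finite_induct)
    case empty
    then show ?case by (simp only: sum.empty zero_in_col_span)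
  next
    case (insert t T)
    then have "column A t + sum (column A) T \<in> col_span B S"
      using assms by (intro col_span_add) auto
    then show ?case by (simp only: sum.insert[OF insert.hyps])
  qed
  then show "v \<in> col_span B S" using T(3) by simp
qed

text \<open>\<open>col_reduct A B\<close> says that \<open>B = A U\<close> for an upper unitriangular matrix \<open>U\<close>
  over \<open>Z_2\<close>.\<close>
definition col_reduct :: "mat \<Rightarrow> mat \<Rightarrow> bool" where
  "col_reduct A B \<longleftrightarrow> (\<forall>k. column B k + column A k \<in> col_span A {..<k})"

lemma col_reduct_refl: "col_reduct A A"
  using sum_column_in_col_span[of "{}"] by (simp add: col_reduct_def)

lemma col_span_col_reduct:
  assumes "col_reduct A B"
  shows "col_span B {..<k} = col_span A {..<k}"
proof (induction k)
  case 0
  then show ?case by (simp add: col_span_def)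
next
  case (Suc k)
  have diff: "column B k + column A k \<in> col_span A {..<k}"
    using assms by (simp add: col_reduct_def)
  have "column B k + column A k \<in> col_span A {..<Suc k}"
    using diff col_span_mono[of "{..<k}" "{..<Suc k}" A] by auto
  moreover have "column A k \<in> col_span A {..<Suc k}"
    by (rule column_in_col_span) simp
  ultimately have "column B k + column A k + column A k \<in> col_span A {..<Suc k}"
    by (rule col_span_add)
  then have B_k: "column B k \<in> col_span A {..<Suc k}" by simp
  have "column A k + column B k \<in> col_span B {..<Suc k}"
    using diff Suc.IH col_span_mono[of "{..<k}" "{..<Suc k}" B] by (auto simp: add.commute)
  moreover have "column B k \<in> col_span B {..<Suc k}"
    by (rule column_in_col_span) simp
  ultimately have "column A k + column B k + column B k \<in> col_span B {..<Suc k}"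
    by (rule col_span_add)
  then have A_k: "column A k \<in> col_span B {..<Suc k}" by simp
  show ?case
  proof
    show "col_span B {..<Suc k} \<subseteq> col_span A {..<Suc k}"
      using B_k Suc.IH col_span_mono[of "{..<k}" "{..<Suc k}" A]
      by (intro col_span_subset) (auto simp: less_Suc_eq intro: column_in_col_span)
    show "col_span A {..<Suc k} \<subseteq> col_span B {..<Suc k}"
      using A_k Suc.IH col_span_mono[of "{..<k}" "{..<Suc k}" B]
      by (intro col_span_subset) (auto simp: less_Suc_eq intro: column_in_col_span)
  qed
qed

lemma column_add_col:
  "column (add_col B s j) k = (if k = j then column B j + column B s else column B k)"
  by (simp add: column_def add_col_def of_bool_neq_bit fun_eq_iff)

lemma col_reduct_add_col:
  assumes reduct: "col_reduct A B" and "s < j"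
  shows "col_reduct A (add_col B s j)"
  unfolding col_reduct_def
proof
  fix k
  show "column (add_col B s j) k + column A k \<in> col_span A {..<k}"
  proof (cases "k = j")
    case True
    have "column B j + column A j \<in> col_span A {..<j}"
      using reduct by (simp add: col_reduct_def)
    moreover have "column B s \<in> col_span A {..<j}"
      using column_in_col_span[of s "{..<Suc s}" B] col_span_col_reduct[OF reduct, of "Suc s"]
        col_span_mono[of "{..<Suc s}" "{..<j}" A] \<open>s < j\<close>
      by auto
    ultimately have "column B j + column A j + column B s \<in> col_span A {..<j}"
      by (rule col_span_add)
    then show ?thesis using True by (simp add: column_add_col algebra_simps)
  next
    case False
    then show ?thesis using reduct by (simp add: column_add_col col_reduct_def)
  qed
qed

definition strictly_upper :: "nat \<Rightarrow> mat \<Rightarrow> bool" where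
  "strictly_upper n B \<longleftrightarrow> (\<forall>i k. B i k \<longrightarrow> 1 \<le> i \<and> i < k \<and> k \<le> n)"

lemma strictly_upper_add_col:
  assumes "strictly_upper n B" "s < j" "j \<le> n"
  shows "strictly_upper n (add_col B s j)"
  using assms less_trans[of _ s j] by (fastforce simp: strictly_upper_def add_col_def)

lemma nonzero_col_if_entry: "strictly_upper n B \<Longrightarrow> B i k \<Longrightarrow> nonzero_col n B k"
  unfolding strictly_upper_def nonzero_col_def by (metis atLeastAtMost_iff less_imp_le_nat le_trans)

lemma low_mem:
  assumes "nonzero_col n B k"
  shows "low n B k \<in> {i\<in>{1..n}. B i k}"
  unfolding low_def by (rule Max_in) (use assms in \<open>auto simp: nonzero_col_def\<close>)

lemma low_in_range: "nonzero_col n B k \<Longrightarrow> low n B k \<in> {1..n}"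
  using low_mem by blast

lemma low_entry: "nonzero_col n B k \<Longrightarrow> B (low n B k) k"
  using low_mem by blast

lemma le_low: "i \<in> {1..n} \<Longrightarrow> B i k \<Longrightarrow> i \<le> low n B k"
  unfolding low_def by (rule Max_ge) auto

lemma low_homog_cong:
  assumes "\<And>i. B' i s = B i s"
  shows "low n B' s = low n B s" "homog n c B' s = homog n c B s"
  using assms by (simp_all add: low_def nonzero_col_def homog_def)

definition homog_pivot :: "nat \<Rightarrow> (nat \<Rightarrow> 'p) \<Rightarrow> mat \<Rightarrow> nat \<Rightarrow> nat \<Rightarrow> bool" where
  "homog_pivot n c B j m \<longleftrightarrow> (\<exists>s<j. homog n c B s \<and> low n B s = m)"

definition reduced_col :: "nat \<Rightarrow> (nat \<Rightarrow> 'p) \<Rightarrow> mat \<Rightarrow> nat \<Rightarrow> bool" where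
  "reduced_col n c B j \<longleftrightarrow> (\<forall>m\<in>{1..n}. B m j \<longrightarrow> \<not> homog_pivot n c B j m)"

lemma homog_pivot_cong:
  assumes "\<And>i k. k < j \<Longrightarrow> B' i k = B i k"
  shows "homog_pivot n c B' j m = homog_pivot n c B j m"
proof -
  have "low n B' s = low n B s \<and> homog n c B' s = homog n c B s" if "s < j" for s
    using low_homog_cong[of B' s B] assms[OF that] by blast
  then show ?thesis by (auto simp: homog_pivot_def)
qed

lemma reduced_col_cong:
  assumes "\<And>i k. k \<le> j \<Longrightarrow> B' i k = B i k"
  shows "reduced_col n c B' j = reduced_col n c B j"
  using homog_pivot_cong[of j B' B n c] assms by (simp add: reduced_col_def)

lemma inj_on_low_Jh:
  assumes "\<forall>k\<in>{1..n}. reduced_col n c B k"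
  shows "inj_on (low n B) (Jh n c B)"
proof -
  have "low n B s \<noteq> low n B t" if "s \<in> Jh n c B" "t \<in> Jh n c B" "s < t" for s t
  proof
    assume same_low: "low n B s = low n B t"
    have t: "t \<in> {1..n}" "nonzero_col n B t" using that(2) by (auto simp: Jh_def homog_def)
    have "homog_pivot n c B t (low n B t)"
      using that(1,3) same_low by (auto simp: homog_pivot_def Jh_def)
    then show False
      using assms t low_in_range[OF t(2)] low_entry[OF t(2)] unfolding reduced_col_def by blast
  qed
  then show ?thesis by (metis inj_onI linorder_neqE_nat)
qed

lemma conmat_inner_invariant:
  assumes "conmat_inner n c j i B B'" "Q B" "\<And>B s. Q B \<Longrightarrow> s < j \<Longrightarrow> Q (add_col B s j)"
  shows "Q B'"
  using assms(1,2) by (induction rule: conmat_inner.induct) (auto intro: assms(3))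

lemma conmat_inner_other_cols:
  assumes "conmat_inner n c j i B B'" "k \<noteq> j"
  shows "B' x k = B x k"
  using conmat_inner_invariant[OF assms(1), of "\<lambda>B'. \<forall>x. B' x k = B x k"] assms(2)
  by (auto simp: add_col_def)

lemma conmat_outer_invariant:
  assumes "conmat_outer n c j B B'" "Q B"
    and "\<And>B s j. Q B \<Longrightarrow> s < j \<Longrightarrow> j \<le> n \<Longrightarrow> Q (add_col B s j)"
  shows "Q B'"
  using assms(1,2)
proof (induction rule: conmat_outer.induct)
  case (step j B B1 B2)
  have "Q B1"
    by (rule conmat_inner_invariant[where Q = Q, OF step.hyps(2) step.prems]) (simp add: assms(3) step.hyps(1))
  then show ?case by (rule step.IH)
qed simp

lemma conmat_inner_reduces_col:
  assumes "conmat_inner n c j i B B'" "strictly_upper n B" "j \<le> n"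
  shows "(\<forall>x>i. B' x j = B x j) \<and> (\<forall>m\<in>{1..i}. B' m j \<longrightarrow> \<not> homog_pivot n c B' j m)"
  using assms(1,2)
proof (induction rule: conmat_inner.induct)
  case (base B)
  then show ?case by simp
next
  case (add B i s B')
  have "strictly_upper n (add_col B s j)"
    using strictly_upper_add_col add.prems add.hyps(2) assms(3) by blast
  note IH = add.IH[OF this]
  have nz: "nonzero_col n B s" using add.hyps(3) by (simp add: homog_def)
  have above_low: "\<not> B x s" if "Suc i < x" for x
  proof
    assume "B x s"
    moreover from this have "x \<in> {1..n}"
      using add.prems less_le_trans[of x s n] by (auto simp: strictly_upper_def)
    ultimately show False using le_low[of x n B s] add.hyps(4) that by simp
  qed
  have "B (Suc i) s" using low_entry[OF nz] add.hyps(4) by simp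
  then have "\<not> B' (Suc i) j" using IH add.hyps(1) by (simp add: add_col_def)
  then show ?case using IH above_low by (auto simp: add_col_def le_Suc_eq)
next
  case (skip B i B')
  note IH = skip.IH[OF skip.prems]
  have "homog_pivot n c B' j (Suc i) = homog_pivot n c B j (Suc i)"
    by (rule homog_pivot_cong) (simp add: conmat_inner_other_cols[OF skip.hyps(2)])
  then show ?case using IH skip.hyps(1) by (auto simp: homog_pivot_def le_Suc_eq)
qed

lemma conmat_outer_reduces:
  assumes "conmat_outer n c j B B'" "strictly_upper n B" "\<forall>k\<in>{1..<j}. reduced_col n c B k"
  shows "\<forall>k\<in>{1..n}. reduced_col n c B' k"
  using assms
proof (induction rule: conmat_outer.induct)
  case (finish j B)
  then show ?case by auto
next
  case (step j B B1 B2)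
  define start where "start = (if nonzero_col n B j then low n B j else 0)"
  have inner: "conmat_inner n c j start B B1" using step.hyps(2) by (simp add: start_def)
  note reduces = conmat_inner_reduces_col[OF inner step.prems(1) step.hyps(1)]
  have upper: "strictly_upper n B1"
    by (rule conmat_inner_invariant[where Q = "strictly_upper n", OF inner step.prems(1)])
      (simp add: strictly_upper_add_col step.hyps(1))
  have "reduced_col n c B1 j"
    unfolding reduced_col_def
  proof (intro ballI impI)
    fix m assume m: "m \<in> {1..n}" "B1 m j"
    show "\<not> homog_pivot n c B1 j m"
    proof (cases "m \<le> start")
      case True
      then show ?thesis using reduces m by auto
    next
      case False
      then have "B m j" using reduces m by auto
      then have "m \<le> start" using le_low[OF m(1)] m(1) by (auto simp: start_def nonzero_col_def)
      with False show ?thesis by simp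
    qed
  qed
  moreover have "reduced_col n c B1 k = reduced_col n c B k" if "k < j" for k
    by (rule reduced_col_cong) (use conmat_inner_other_cols[OF inner] that in auto)
  ultimately have "\<forall>k\<in>{1..<Suc j}. reduced_col n c B1 k"
    using step.prems(2) by (auto simp: less_Suc_eq)
  then show ?case using step.IH upper by blast
qed

definition mat_vec :: "nat \<Rightarrow> mat \<Rightarrow> (nat \<Rightarrow> bit) \<Rightarrow> nat \<Rightarrow> bit" where
  "mat_vec n A v = (\<lambda>m. \<Sum>i\<in>{1..n}. column A i m * v i)"

lemma mat_vec_sum: "mat_vec n A (sum f T) = (\<Sum>t\<in>T. mat_vec n A (f t))"
proof
  fix m
  have "(\<Sum>i\<in>{1..n}. column A i m * (\<Sum>t\<in>T. f t i)) = (\<Sum>t\<in>T. \<Sum>i\<in>{1..n}. column A i m * f t i)"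
    unfolding sum_distrib_left by (rule sum.swap)
  then show "mat_vec n A (sum f T) m = (\<Sum>t\<in>T. mat_vec n A (f t)) m"
    by (simp add: mat_vec_def sum_fun_apply)
qed

lemma mat_vec_col_span:
  assumes "\<And>k. mat_vec n A (column A k) = 0" "v \<in> col_span A S"
  shows "mat_vec n A v = 0"
  using assms by (auto simp: col_span_def mat_vec_sum)

lemma mat_vec_column: "mat_vec n A (column R s) = sum (column A) {i\<in>{1..n}. R i s}"
proof
  fix m
  have "(\<Sum>i\<in>{1..n}. column A i m * column R s i) = (\<Sum>i\<in>{i\<in>{1..n}. R i s}. column A i m)"
    by (subst sum.inter_filter) (auto intro!: sum.cong simp: column_def of_bool_def)
  then show "mat_vec n A (column R s) m = sum (column A) {i\<in>{1..n}. R i s} m"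
    by (simp add: mat_vec_def sum_fun_apply)
qed

text \<open>Since \<open>A\<^sup>2 = 0\<close>, the vector \<open>A\<close> times column \<open>s\<close> of \<open>R = A U\<close> vanishes; its
  last term is column \<open>low s\<close> of \<open>A\<close>, which is therefore a sum of earlier columns.\<close>
lemma pivot_column_in_col_span:
  assumes reduct: "col_reduct A R" and square_zero: "\<And>k. mat_vec n A (column A k) = 0"
    and nz: "nonzero_col n R s"
  defines "j \<equiv> low n R s"
  shows "column R j \<in> col_span R {..<j}"
proof -
  have "column R s \<in> col_span A {..<Suc s}"
    using column_in_col_span[of s "{..<Suc s}" R] col_span_col_reduct[OF reduct] by auto
  then have "mat_vec n A (column R s) = 0" by (rule mat_vec_col_span[OF square_zero])
  moreover have "{i\<in>{1..n}. R i s} = insert j {i\<in>{1..n}. R i s \<and> i < j}"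
  proof (intro equalityI subsetI)
    fix i assume i: "i \<in> {i\<in>{1..n}. R i s}"
    then have "i \<le> j" using le_low[of i n R s] by (simp add: j_def)
    then show "i \<in> insert j {i\<in>{1..n}. R i s \<and> i < j}" using i by auto
  next
    fix i assume "i \<in> insert j {i\<in>{1..n}. R i s \<and> i < j}"
    then show "i \<in> {i\<in>{1..n}. R i s}" using low_in_range[OF nz] low_entry[OF nz] by (auto simp: j_def)
  qed
  ultimately have "column A j + sum (column A) {i\<in>{1..n}. R i s \<and> i < j} = 0"
    by (simp add: mat_vec_column)
  then have "column A j \<in> col_span A {..<j}"
    by (auto simp: bitvec_add_eq_0_iff intro: sum_column_in_col_span)
  then have "column R j + column A j + column A j \<in> col_span A {..<j}"
    by - (rule col_span_add, use reduct in \<open>simp_all add: col_reduct_def\<close>)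
  then show ?thesis using col_span_col_reduct[OF reduct] by simp
qed

definition convex_levels :: "nat \<Rightarrow> (nat \<Rightarrow> 'p) \<Rightarrow> bool" where
  "convex_levels n c \<longleftrightarrow>
    (\<forall>i\<in>{1..n}. \<forall>j\<in>{1..n}. \<forall>k. i \<le> k \<and> k \<le> j \<and> c i = c j \<longrightarrow> c k = c i)"

lemma convex_levelsD:
  "convex_levels n c \<Longrightarrow> i \<in> {1..n} \<Longrightarrow> j \<in> {1..n} \<Longrightarrow> i \<le> k \<Longrightarrow> k \<le> j \<Longrightarrow> c i = c j
    \<Longrightarrow> c k = c i"
  unfolding convex_levels_def by blast

lemma sum_column_level_restrict:
  assumes upper: "strictly_upper n R" and convex: "convex_levels n c"
    and j: "j \<in> {1..n}" and T: "finite T" "T \<subseteq> {..<j}" and m: "m \<in> {1..n}" "c m = c j"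
  shows "sum (column R) T m = sum (column R) {t\<in>T. homog n c R t \<and> c t = c j} m"
proof -
  have "\<not> R m t" if t: "t \<in> T" "\<not> (homog n c R t \<and> c t = c j)" for t
  proof
    assume entry: "R m t"
    then have "m < t" "t < j" using upper t(1) T(2) by (auto simp: strictly_upper_def)
    then have level_t: "c t = c j" using convex_levelsD[OF convex m(1) j, of t] m(2) by simp
    have nz: "nonzero_col n R t" using nonzero_col_if_entry[OF upper entry] .
    have "m \<le> low n R t" "low n R t < t" "t \<in> {1..n}"
      using le_low[of m n R t, OF m(1) entry] upper low_entry[OF nz] \<open>m < t\<close> \<open>t < j\<close> j
      by (auto simp: strictly_upper_def)
    then have "c (low n R t) = c j"
      using convex_levelsD[OF convex m(1) j, of "low n R t"] m(2) \<open>t < j\<close> by simp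
    then have "homog n c R t" using nz level_t \<open>t \<in> {1..n}\<close> by (simp add: homog_def)
    with t level_t show False by simp
  qed
  then show ?thesis
    unfolding sum_fun_apply by (intro sum.mono_neutral_right) (auto simp: T column_def)
qed

lemma sum_columns_distinct_lows:
  assumes "finite G" "G \<noteq> {}" "inj_on (low n B) G" "\<And>t. t \<in> G \<Longrightarrow> nonzero_col n B t"
  defines "L \<equiv> Max (low n B ` G)"
  shows "sum (column B) G L = 1" and "\<And>m. L < m \<Longrightarrow> m \<le> n \<Longrightarrow> sum (column B) G m = 0"
proof -
  have le_L: "low n B t \<le> L" if "t \<in> G" for t
    using assms(1) that by (simp add: L_def)
  have "L \<in> low n B ` G" unfolding L_def using assms(1,2) by (intro Max_in) auto
  then obtain t0 where t0: "t0 \<in> G" "low n B t0 = L" by auto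
  have L_range: "L \<in> {1..n}" using low_in_range[OF assms(4)[OF t0(1)]] t0(2) by simp
  have off: "\<not> B m t" if "t \<in> G" "L \<le> m" "m \<le> n" "m \<noteq> L \<or> t \<noteq> t0" for m t
  proof
    assume "B m t"
    then have "m \<le> low n B t" using le_low[of m n B t] L_range that(2,3) by simp
    then have "m = L" "low n B t = low n B t0" using le_L[OF that(1)] that(2) t0(2) by auto
    then show False using assms(3) that t0(1) by (auto dest: inj_onD)
  qed
  have "sum (column B) G L = (\<Sum>t\<in>{t0}. column B t L)"
    unfolding sum_fun_apply
    by (rule sum.mono_neutral_right) (use assms(1) t0 off[where m = L] L_range in \<open>auto simp: column_def\<close>)
  then show "sum (column B) G L = 1"
    using low_entry[OF assms(4)[OF t0(1)]] t0(2) by (simp add: column_def)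
  show "sum (column B) G m = 0" if "L < m" "m \<le> n" for m
    unfolding sum_fun_apply using off that by (intro sum.neutral) (auto simp: column_def)
qed

lemma Jh_Jt_disjoint:
  assumes upper: "strictly_upper n R" and reduct: "col_reduct A R"
    and square_zero: "\<And>k. mat_vec n A (column A k) = 0" and convex: "convex_levels n c"
    and reduced: "\<forall>k\<in>{1..n}. reduced_col n c R k"
  shows "Jh n c R \<inter> Jt n c R = {}"
proof (rule ccontr)
  assume "Jh n c R \<inter> Jt n c R \<noteq> {}"
  then obtain s j where s: "homog n c R s" and j: "homog n c R j" and j_low: "j = low n R s"
    by (auto simp: Jh_def Jt_def)
  define l where "l = low n R j"
  have j_range: "j \<in> {1..n}" and nz: "nonzero_col n R j" and level_l: "c l = c j"
    using j by (auto simp: homog_def l_def)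
  have l_range: "l \<in> {1..n}" and entry_l: "R l j"
    using low_in_range[OF nz] low_entry[OF nz] by (auto simp: l_def)
  obtain T where T: "finite T" "T \<subseteq> {..<j}" "column R j = sum (column R) T"
    using pivot_column_in_col_span[OF reduct square_zero, of s] s j_low
    by (auto simp: homog_def col_span_def)
  define G where "G = {t\<in>T. homog n c R t \<and> c t = c j}"
  have level: "column R j m = sum (column R) G m" if "m \<in> {1..n}" "c m = c j" for m
    using sum_column_level_restrict[OF upper convex j_range T(1,2) that] T(3) by (simp add: G_def)
  have sum_l: "sum (column R) G l = 1"
    using level[OF l_range level_l] entry_l by (simp add: column_def)
  then have "G \<noteq> {}" by auto
  have "finite G" using T(1) by (simp add: G_def)
  have "inj_on (low n R) G"
    using inj_on_low_Jh[OF reduced] by (rule inj_on_subset) (auto simp: G_def Jh_def)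
  have "nonzero_col n R t" if "t \<in> G" for t using that by (simp add: G_def homog_def)
  define L where "L = Max (low n R ` G)"
  note pivot = sum_columns_distinct_lows[OF \<open>finite G\<close> \<open>G \<noteq> {}\<close> \<open>inj_on (low n R) G\<close>
      \<open>\<And>t. t \<in> G \<Longrightarrow> nonzero_col n R t\<close>, folded L_def]
  have "L \<in> low n R ` G" unfolding L_def using \<open>finite G\<close> \<open>G \<noteq> {}\<close> by (intro Max_in) auto
  then obtain t0 where t0: "t0 \<in> G" "low n R t0 = L" by auto
  have t0_homog: "homog n c R t0" "c t0 = c j" "t0 < j" using t0(1) T(2) by (auto simp: G_def)
  have "l \<le> L"
  proof (rule ccontr)
    assume "\<not> l \<le> L"
    then show False using pivot(2)[of l] sum_l l_range by simp
  qed
  moreover have "L \<le> l"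
  proof -
    have "L \<in> {1..n}" "c L = c j"
      using t0_homog low_in_range[of n R t0] t0(2) by (auto simp: homog_def)
    then have "column R j L = 1"
      using level pivot(1) by simp
    then have "R L j" by (simp add: column_def)
    then show ?thesis using le_low[of L n R j, OF \<open>L \<in> {1..n}\<close>] by (simp add: l_def)
  qed
  ultimately have "homog_pivot n c R j l"
    using t0 t0_homog by (auto simp: homog_pivot_def)
  then show False using reduced j_range l_range entry_l by (auto simp: reduced_col_def)
qed

lemma card_codim_one_between:
  assumes "finite Y" "X \<subseteq> Y" "card Y = card X + 2"
  shows "card {Z. X \<subseteq> Z \<and> Z \<subseteq> Y \<and> card Z = card X + 1} = 2"
proof -
  have "finite X" using assms(1,2) finite_subset by blast
  have "{Z. X \<subseteq> Z \<and> Z \<subseteq> Y \<and> card Z = card X + 1} = (\<lambda>y. insert y X) ` (Y - X)"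
  proof (intro equalityI subsetI)
    fix Z assume Z: "Z \<in> {Z. X \<subseteq> Z \<and> Z \<subseteq> Y \<and> card Z = card X + 1}"
    then have "card (Z - X) = 1" using card_Diff_subset[OF \<open>finite X\<close>] by simp
    then obtain y where "Z - X = {y}" by (meson card_1_singletonE)
    then show "Z \<in> (\<lambda>y. insert y X) ` (Y - X)" using Z by blast
  next
    fix Z assume "Z \<in> (\<lambda>y. insert y X) ` (Y - X)"
    then show "Z \<in> {Z. X \<subseteq> Z \<and> Z \<subseteq> Y \<and> card Z = card X + 1}"
      using assms(2) \<open>finite X\<close> by auto
  qed
  moreover have "inj_on (\<lambda>y. insert y X) (Y - X)"
    by (auto intro!: inj_onI simp: insert_ident)
  moreover have "card (Y - X) = 2" using card_Diff_subset[OF \<open>finite X\<close> assms(2)] assms(3) by simp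
  ultimately show ?thesis by (simp add: card_image)
qed

text \<open>The entry \<open>(m, k)\<close> of \<open>A\<^sup>2\<close> counts the facets of \<open>\<sigma>\<^sub>k\<close> containing \<open>\<sigma>\<^sub>m\<close> as a facet:
  there are none or exactly two.\<close>
lemma boundary_matrix_square_zero:
  assumes K: "simplicial_complex K" and bij: "bij_betw \<sigma> {1..card K} K"
  defines "A \<equiv> boundary_matrix (card K) \<sigma>"
  shows "mat_vec (card K) A (column A k) = 0"
proof
  fix m
  let ?n = "card K"
  define S where "S = {i\<in>{1..?n}. A m i \<and> A i k}"
  have "card S = 0 \<or> card S = 2"
  proof (cases "S = {}")
    case False
    then obtain i where i: "i \<in> S" by auto
    then have mk: "m \<in> {1..?n}" "k \<in> {1..?n}" and sub: "\<sigma> m \<subseteq> \<sigma> k"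
      and codim: "card (\<sigma> k) = card (\<sigma> m) + 2"
      by (auto simp: S_def A_def boundary_matrix_def)
    have "\<sigma> k \<in> K" using bij mk by (auto simp: bij_betw_def)
    then have "finite (\<sigma> k)" using K by (simp add: simplicial_complex_def)
    have "\<sigma> ` S = {Z. \<sigma> m \<subseteq> Z \<and> Z \<subseteq> \<sigma> k \<and> card Z = card (\<sigma> m) + 1}"
    proof (intro equalityI subsetI)
      fix Z assume "Z \<in> \<sigma> ` S"
      then show "Z \<in> {Z. \<sigma> m \<subseteq> Z \<and> Z \<subseteq> \<sigma> k \<and> card Z = card (\<sigma> m) + 1}"
        by (auto simp: S_def A_def boundary_matrix_def)
    next
      fix Z assume Z: "Z \<in> {Z. \<sigma> m \<subseteq> Z \<and> Z \<subseteq> \<sigma> k \<and> card Z = card (\<sigma> m) + 1}"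
      then have "Z \<noteq> {}" by auto
      then have "Z \<in> K" using K \<open>\<sigma> k \<in> K\<close> Z unfolding simplicial_complex_def by blast
      then obtain i where "i \<in> {1..?n}" "\<sigma> i = Z" using bij by (metis bij_betw_def imageE)
      then show "Z \<in> \<sigma> ` S" using Z mk codim by (auto simp: S_def A_def boundary_matrix_def)
    qed
    moreover have "inj_on \<sigma> S" using bij by (auto simp: bij_betw_def S_def intro: inj_on_subset)
    ultimately have "card S = 2"
      using card_codim_one_between[OF \<open>finite (\<sigma> k)\<close> sub codim] by (metis card_image)
    then show ?thesis by simp
  qed simp
  moreover have "mat_vec ?n A (column A k) m = of_nat (card S)"
    by (simp add: mat_vec_def column_def S_def sum_of_bool_eq Int_def flip: of_bool_conj)
  ultimately show "mat_vec ?n A (column A k) m = 0 m" by auto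
qed

lemma convex_levels_admissible:
  assumes "admissible_enumeration K P idx \<sigma>"
  shows "convex_levels (card K) (idx \<circ> \<sigma>)"
proof -
  obtain r where r: "linear_order_on P r"
    and mono: "\<forall>i\<in>{1..card K}. \<forall>j\<in>{1..card K}. i \<le> j \<longrightarrow> (idx (\<sigma> i), idx (\<sigma> j)) \<in> r"
    using assms unfolding admissible_enumeration_def by blast
  have "antisym r" using r by (simp add: linear_order_on_def partial_order_on_def)
  show ?thesis
    unfolding convex_levels_def
  proof (intro ballI allI impI)
    fix i j k assume i: "i \<in> {1..card K}" and j: "j \<in> {1..card K}"
      and k: "i \<le> k \<and> k \<le> j \<and> (idx \<circ> \<sigma>) i = (idx \<circ> \<sigma>) j"
    then have "k \<in> {1..card K}" by auto
    then have "(idx (\<sigma> i), idx (\<sigma> k)) \<in> r" "(idx (\<sigma> k), idx (\<sigma> j)) \<in> r"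
      using mono i j k by blast+
    then have "(idx (\<sigma> i), idx (\<sigma> k)) \<in> r" "(idx (\<sigma> k), idx (\<sigma> i)) \<in> r"
      using k by simp_all
    then show "(idx \<circ> \<sigma>) k = (idx \<circ> \<sigma>) i" using \<open>antisym r\<close> by (simp add: antisym_def)
  qed
qed

lemma strictly_upper_boundary_matrix:
  assumes "admissible_enumeration K P idx \<sigma>"
  shows "strictly_upper (card K) (boundary_matrix (card K) \<sigma>)"
  unfolding strictly_upper_def
proof (intro allI impI)
  fix i k assume "boundary_matrix (card K) \<sigma> i k"
  then have "i \<in> {1..card K}" "k \<in> {1..card K}" "\<sigma> i \<subset> \<sigma> k"
    by (auto simp: boundary_matrix_def)
  then show "1 \<le> i \<and> i < k \<and> k \<le> card K"
    using assms by (auto simp: admissible_enumeration_def)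
qed

theorem proposition4:
  fixes K :: "'v set set" and V :: "'v set set set" and P :: "'p::order set"
    and idx :: "'v set \<Rightarrow> 'p" and \<sigma> :: "nat \<Rightarrow> 'v set" and Aout :: mat
  assumes "simplicial_complex K"
    and "multivector_field K V"
    and "morse_decomposition K V P idx"
    and "admissible_enumeration K P idx \<sigma>"
    and "conmat_reduction (card K) (idx \<circ> \<sigma>) (boundary_matrix (card K) \<sigma>) Aout"
  shows "bij_betw (low (card K) Aout) (Jh (card K) (idx \<circ> \<sigma>) Aout) (Jt (card K) (idx \<circ> \<sigma>) Aout) \<and>
    Jh (card K) (idx \<circ> \<sigma>) Aout \<inter> Jt (card K) (idx \<circ> \<sigma>) Aout = {} \<and>
    (\<forall>j\<in>{1..card K}. \<forall>i\<in>{1..card K}. Aout i j \<and> i \<le> low (card K) Aout j \<longrightarrow>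
           \<not> (\<exists>s\<in>Jh (card K) (idx \<circ> \<sigma>) Aout. s < j \<and> low (card K) Aout s = i))"
proof -
  let ?n = "card K" and ?c = "idx \<circ> \<sigma>" and ?A = "boundary_matrix (card K) \<sigma>"
  \<comment> \<open>The multivector field and the Morse decomposition enter only through the
    admissible enumeration.\<close>
  have bij: "bij_betw \<sigma> {1..?n} K" using assms(4) by (simp add: admissible_enumeration_def)
  have outer: "conmat_outer ?n ?c 1 ?A Aout" using assms(5) by (simp add: conmat_reduction_def)
  have upper_A: "strictly_upper ?n ?A" using strictly_upper_boundary_matrix[OF assms(4)] .
  have upper: "strictly_upper ?n Aout"
    by (rule conmat_outer_invariant[where Q = "strictly_upper ?n", OF outer upper_A])
      (rule strictly_upper_add_col)
  have reduct: "col_reduct ?A Aout"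
    by (rule conmat_outer_invariant[OF outer col_reduct_refl]) (rule col_reduct_add_col)
  have reduced: "\<forall>k\<in>{1..?n}. reduced_col ?n ?c Aout k"
    using conmat_outer_reduces[OF outer upper_A] by simp
  have "bij_betw (low ?n Aout) (Jh ?n ?c Aout) (Jt ?n ?c Aout)"
    using inj_on_low_Jh[OF reduced] by (simp add: bij_betw_def Jt_def)
  moreover have "Jh ?n ?c Aout \<inter> Jt ?n ?c Aout = {}"
    by (rule Jh_Jt_disjoint[OF upper reduct boundary_matrix_square_zero[OF assms(1) bij]
          convex_levels_admissible[OF assms(4)] reduced])
  moreover have "\<forall>j\<in>{1..?n}. \<forall>i\<in>{1..?n}. Aout i j \<and> i \<le> low ?n Aout j \<longrightarrow>
      \<not> (\<exists>s\<in>Jh ?n ?c Aout. s < j \<and> low ?n Aout s = i)"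
    using reduced by (auto simp: reduced_col_def homog_pivot_def Jh_def)
  ultimately show ?thesis by blast
qed

end
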